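(* Let $\Psi=\{\psi_i\}_{i=1}^N\subset\mathbb{R}^d$ be a frame for $\mathbb{R}^d$ with $\sum_{i=1}^N\psi_i=0$, and let $\mu=\frac1N\sum_{i=1}^N\delta_{\psi_i}$. Then $\mu$ has no equal-weight transport dual supported on a set of cardinality $d$; that is, there is no measure of the form $\nu=\frac1d\sum_{k=1}^d\delta_{\varphi_k}$ with $d$ distinct points $\varphi_1,\dots,\varphi_d\in\mathbb{R}^d$ such that $\nu\in D_\mu$.
   Context: A finite frame for $\mathbb{R}^d$ is a finite set of vectors spanning $\mathbb{R}^d$. $\Gamma(\mu,\nu)$ is the set of probability measures on $\mathbb{R}^d\times\mathbb{R}^d$ with marginals $\mu$ and $\nu$. For a probabilistic frame $\mu$ (a probability measure with finite second moment whose support spans $\mathbb{R}^d$), a probability measure $\nu$ with finite second moment is a transport dual to $\mu$ if there exists $\gamma\in\Gamma(\mu,\nu)$ with $\iint xy^\top d\gamma(x,y)=I$; $D_\mu$ denotes the set of transport duals of $\mu$. *)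

theory Defs
  imports "HOL-Probability.Probability"
begin

definition finite_frame :: "nat \<Rightarrow> (nat \<Rightarrow> real^'d) \<Rightarrow> bool" where
  "finite_frame N \<psi> \<longleftrightarrow> inj_on \<psi> {..<N} \<and> span (\<psi> ` {..<N}) = UNIV"

definition empirical_measure :: "'i set \<Rightarrow> ('i \<Rightarrow> real^'d) \<Rightarrow> (real^'d) measure" where
  "empirical_measure I \<psi> = distr (uniform_count_measure I) borel \<psi>"

definition outer :: "real^'d \<Rightarrow> real^'d \<Rightarrow> real^'d^'d" where
  "outer x y = (\<chi> i j. x $ i * y $ j)"

definition finite_second_moment :: "(real^'d) measure \<Rightarrow> bool" where
  "finite_second_moment \<nu> \<longleftrightarrow> prob_space \<nu> \<and> sets \<nu> = sets borel
     \<and> integrable \<nu> (\<lambda>x. (norm x)\<^sup>2)"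

definition couplings :: "(real^'d) measure \<Rightarrow> (real^'d) measure \<Rightarrow> ((real^'d) \<times> (real^'d)) measure set" where
  "couplings \<mu> \<nu> = {\<gamma>. prob_space \<gamma> \<and> sets \<gamma> = sets (borel :: ((real^'d) \<times> (real^'d)) measure)
      \<and> distr \<gamma> (borel :: (real^'d) measure) fst = \<mu> \<and> distr \<gamma> (borel :: (real^'d) measure) snd = \<nu>}"

definition transport_dual :: "(real^'d) measure \<Rightarrow> (real^'d) measure \<Rightarrow> bool" where
  "transport_dual \<mu> \<nu> \<longleftrightarrow> finite_second_moment \<nu> \<and>
     (\<exists>\<gamma>\<in>couplings \<mu> \<nu>. integrable \<gamma> (\<lambda>(x,y). outer x y)
        \<and> (\<integral>p. (case p of (x,y) \<Rightarrow> outer x y) \<partial>\<gamma>) = mat 1)"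

end

theory Submission
  imports Defs
begin

text \<open>
  Any d points phi_1, ..., phi_d of R^d lie on a common affine hyperplane
  {y. y \<bullet> w = c} with w \<noteq> 0. If \<gamma> couples \<mu> with the uniform measure on these
  points and the integral of x y^T over \<gamma> is the identity, then testing this identity with
  w on both sides gives w \<bullet> w = \<integral> (w \<bullet> x) (y \<bullet> w) d\<gamma> = c \<integral> (w \<bullet> x) d\<mu>, which vanishes
  because \<mu> has mean zero.
\<close>

lemma points_in_common_hyperplane:
  fixes \<phi> :: "'i \<Rightarrow> 'a::euclidean_space"
  assumes "finite I" and "card I \<le> DIM('a)"
  obtains w c where "w \<noteq> 0" and "\<And>k. k \<in> I \<Longrightarrow> \<phi> k \<bullet> w = c"
proof (cases "I = {}")
  case True
  obtain b :: 'a where "b \<in> Basis" using nonempty_Basis by blast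
  with True that[of b 0] show ?thesis by (auto simp: nonzero_Basis)
next
  case False
  then obtain k0 where "k0 \<in> I" by blast
  define S where "S = (\<lambda>k. \<phi> k - \<phi> k0) ` (I - {k0})"
  have "dim S \<le> card S"
    using assms(1) by (simp add: S_def dim_le_card')
  also have "\<dots> \<le> card (I - {k0})"
    unfolding S_def using card_image_le assms(1) by blast
  also have "\<dots> < DIM('a)"
    using card_Diff1_less[OF assms(1) \<open>k0 \<in> I\<close>] assms(2) by linarith
  finally obtain w where "w \<noteq> 0" and w: "\<And>y. y \<in> span S \<Longrightarrow> orthogonal w y"
    using orthogonal_to_subspace_exists by blast
  have "\<phi> k \<bullet> w = \<phi> k0 \<bullet> w" if "k \<in> I" for k
  proof (cases "k = k0")
    case False
    with that have "\<phi> k - \<phi> k0 \<in> span S" unfolding S_def by (auto intro: span_base)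
    then have "w \<bullet> (\<phi> k - \<phi> k0) = 0" using w orthogonal_def by blast
    then show ?thesis by (simp add: inner_diff_right inner_commute)
  qed simp
  with \<open>w \<noteq> 0\<close> that show ?thesis by blast
qed

lemma outer_mult_vec: "outer x y *v v = (y \<bullet> v) *\<^sub>R x"
  by (simp add: outer_def matrix_vector_mult_def inner_vec_def vec_eq_iff sum_distrib_left mult_ac)

lemma bounded_linear_mult_vec_left: "bounded_linear (\<lambda>A::real^'n^'m. A *v v)"
  by (auto simp: linear_conv_bounded_linear[symmetric] linear_iff matrix_vector_mult_def vec_eq_iff
      algebra_simps sum.distrib sum_distrib_left)

lemma sets_coupling: "\<gamma> \<in> couplings \<mu> \<nu> \<Longrightarrow> sets \<gamma> = sets borel"
  by (simp add: couplings_def)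

lemma measurable_coupling:
  assumes "\<gamma> \<in> couplings \<mu> \<nu>" and "f \<in> measurable borel N"
  shows "f \<in> measurable \<gamma> N"
  using assms by (simp add: measurable_cong_sets[OF sets_coupling refl])

lemma integral_fst_coupling:
  fixes f :: "real^'d \<Rightarrow> real"
  assumes \<gamma>: "\<gamma> \<in> couplings \<mu> \<nu>" and f: "f \<in> borel_measurable borel"
  shows "(\<integral>p. f (fst p) \<partial>\<gamma>) = (\<integral>x. f x \<partial>\<mu>)"
proof -
  have "fst \<in> measurable \<gamma> (borel :: (real^'d) measure)"
    by (rule measurable_coupling[OF \<gamma>]) (intro borel_measurable_continuous_onI continuous_intros)
  from integral_distr[OF this f] \<gamma> show ?thesis
    by (simp add: couplings_def)
qed

lemma AE_snd_coupling:
  fixes \<gamma> :: "((real^'d) \<times> (real^'d)) measure"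
  assumes \<gamma>: "\<gamma> \<in> couplings \<mu> \<nu>" and P: "AE y in \<nu>. P y"
  shows "AE p in \<gamma>. P (snd p)"
proof (rule AE_distrD[where f = snd])
  show "snd \<in> measurable \<gamma> (borel :: (real^'d) measure)"
    by (rule measurable_coupling[OF \<gamma>]) (intro borel_measurable_continuous_onI continuous_intros)
  have "distr \<gamma> borel snd = \<nu>"
    using \<gamma> by (simp add: couplings_def)
  then show "AE y in distr \<gamma> borel snd. P y"
    using P by (simp only:)
qed

lemma measurable_uniform_count_measure_borel:
  "f \<in> measurable (uniform_count_measure I) borel"
  by (simp add: measurable_cong_sets[OF sets_uniform_count_measure_count_space refl])

lemma integral_empirical_measure:
  fixes f :: "real^'d \<Rightarrow> real"
  assumes "finite I" and "f \<in> borel_measurable borel"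
  shows "(\<integral>x. f x \<partial>empirical_measure I \<psi>) = (\<Sum>i\<in>I. f (\<psi> i)) / card I"
  using assms
  by (simp add: empirical_measure_def integral_distr integral_uniform_count_measure
      measurable_uniform_count_measure_borel)

lemma AE_empirical_measure_image:
  assumes "finite I"
  shows "AE y in empirical_measure I \<psi>. y \<in> \<psi> ` I"
proof -
  have "\<psi> ` I \<in> sets borel"
    using assms by (intro borel_closed finite_imp_closed) simp
  then show ?thesis
    unfolding empirical_measure_def
    by (subst AE_distr_iff[OF measurable_uniform_count_measure_borel])
      (auto simp: space_uniform_count_measure)
qed
lemma inner_integral_outer_mult_vec:
  fixes \<gamma> :: "((real^'d) \<times> (real^'d)) measure"
  assumes "integrable \<gamma> (\<lambda>(x, y). outer x y)"
  shows "w \<bullet> ((\<integral>p. (case p of (x, y) \<Rightarrow> outer x y) \<partial>\<gamma>) *v w)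
           = (\<integral>p. (w \<bullet> fst p) * (snd p \<bullet> w) \<partial>\<gamma>)"
proof -
  have "w \<bullet> ((\<integral>p. (case p of (x, y) \<Rightarrow> outer x y) \<partial>\<gamma>) *v w)
          = (\<integral>p. w \<bullet> ((case p of (x, y) \<Rightarrow> outer x y) *v w) \<partial>\<gamma>)"
    by (rule integral_bounded_linear[symmetric, OF _ assms])
       (intro bounded_linear_compose[OF bounded_linear_inner_right bounded_linear_mult_vec_left])
  then show ?thesis
    by (simp add: case_prod_beta outer_mult_vec mult.commute)
qed

theorem mainTheorem3:
  fixes \<psi> :: "nat \<Rightarrow> real^'d" and N :: nat
  assumes "finite_frame N \<psi>"
    and "(\<Sum>i<N. \<psi> i) = 0"
  shows "\<not> (\<exists>\<phi> :: 'd \<Rightarrow> real^'d. inj \<phi> \<and>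
            transport_dual (empirical_measure {..<N} \<psi>) (empirical_measure UNIV \<phi>))"
proof
  assume "\<exists>\<phi> :: 'd \<Rightarrow> real^'d. inj \<phi> \<and>
            transport_dual (empirical_measure {..<N} \<psi>) (empirical_measure UNIV \<phi>)"
  then obtain \<phi> :: "'d \<Rightarrow> real^'d" and \<gamma>
    where \<gamma>: "\<gamma> \<in> couplings (empirical_measure {..<N} \<psi>) (empirical_measure UNIV \<phi>)"
      and integrable: "integrable \<gamma> (\<lambda>(x, y). outer x y)"
      and identity: "(\<integral>p. (case p of (x, y) \<Rightarrow> outer x y) \<partial>\<gamma>) = mat 1"
    unfolding transport_dual_def by blast
  obtain w c where "w \<noteq> 0" and hyperplane: "\<And>k. \<phi> k \<bullet> w = c"
    using points_in_common_hyperplane[of "UNIV :: 'd set" \<phi>] by auto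
  have "AE p in \<gamma>. snd p \<bullet> w = c"
    using AE_snd_coupling[OF \<gamma> AE_empirical_measure_image] hyperplane by auto
  then have ae: "AE p in \<gamma>. (w \<bullet> fst p) * (snd p \<bullet> w) = c * (w \<bullet> fst p)"
    by eventually_elim simp
  have mean: "(\<integral>p. w \<bullet> fst p \<partial>\<gamma>) = 0"
    using integral_fst_coupling[OF \<gamma>, of "\<lambda>x. w \<bullet> x"] assms(2)
    by (simp add: integral_empirical_measure inner_sum_right[symmetric])
  have "w \<bullet> w = w \<bullet> ((\<integral>p. (case p of (x, y) \<Rightarrow> outer x y) \<partial>\<gamma>) *v w)"
    by (simp add: identity)
  also have "\<dots> = (\<integral>p. (w \<bullet> fst p) * (snd p \<bullet> w) \<partial>\<gamma>)"
    by (rule inner_integral_outer_mult_vec[OF integrable])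
  also have "\<dots> = (\<integral>p. c * (w \<bullet> fst p) \<partial>\<gamma>)"
    using ae by (intro integral_cong_AE measurable_coupling[OF \<gamma>])
      (auto intro!: borel_measurable_continuous_onI continuous_intros)
  also have "\<dots> = 0"
    using mean by simp
  finally show False
    using \<open>w \<noteq> 0\<close> by simp
qed

end
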